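(* Let $(\mathbb{P},\le,f)$ be a forcing property for $\mathcal{L}_A$. For all $p\in\mathbb{P}$ and sentences of $\mathcal{L}_A(C)$ of the indicated forms: $F^w_p(\neg\varphi)=1-\inf_{q\le p}F^w_q(\varphi)$; $F^w_p(\tfrac12\varphi)=\tfrac12F^w_p(\varphi)$; $F^w_p(\varphi\dotplus\psi)=\sup_{q\le p}\inf_{q'\le q}\min\big(F^w_{q'}(\varphi)+F^w_{q'}(\psi),1\big)$; $F^w_p(\bigwedge\Phi)=\sup_{q\le p}\inf_{q'\le q}\inf_{\varphi\in\Phi}F^w_{q'}(\varphi)$; $F^w_p(\inf_x\varphi(x))=\sup_{q\le p}\inf_{q'\le q}\inf_{c\in C}F^w_{q'}(\varphi(c))$.
   Context: $\mathcal{L}$ is a countable continuous signature; formulas of $\mathcal{L}_{\omega_1,\omega}$ are built from atomic formulas using $\neg$, $\tfrac12$, $\dotplus$, countable conjunctions $\bigwedge$ and $\inf_x$. $\mathcal{L}_A$ is a countable fragment, $C=\{c_i:i<\omega\}$ new constants, $\mathcal{L}_A(C)$ the smallest countable fragment of $\mathcal{L}_{\omega_1,\omega}(C)$ containing $\mathcal{L}_A$, $\mathcal{L}_A^{as}(C)$ its atomic sentences, $\mathcal{T}(C)$ closed terms. A forcing property $(\mathbb{P},\le,f)$: poset with $f_p\colon\mathcal{L}_A^{as}(C)\to[0,1]$ such that (1) $p\le q\Rightarrow f_p\le f_q$; (2) for every $p$, $\varepsilon>0$, $\tau,\sigma\in\mathcal{T}(C)$, atomic $\varphi(x)$ there are $q\le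 p$, $c\in C$ with $f_q(d(\tau,c))<\varepsilon$, $f_q(d(\tau,\sigma))<f_p(d(\sigma,\tau))+\varepsilon$, and if $f_p(d(\tau,\sigma))<\delta_{\varphi,x}(\varepsilon)$ then $f_q(\varphi(\sigma))<f_p(\varphi(\tau))+\varepsilon$. $F_p$ on sentences: $f_p$ on atomics; $F_p(\neg\varphi)=1-\inf_{q\le p}F_q(\varphi)$; $F_p(\tfrac12\varphi)=\tfrac12F_p(\varphi)$; $F_p(\varphi\dotplus\psi)=\min(F_p(\varphi)+F_p(\psi),1)$; $F_p(\bigwedge\Phi)=\inf_{\varphi\in\Phi}F_p(\varphi)$; $F_p(\inf_x\varphi)=\inf_{c\in C}F_p(\varphi(c))$. Weak forcing: $F^w_p(\varphi)=\sup_{q\le p}\inf_{q'\le q}F_{q'}(\varphi)$. *)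

theory Defs
  imports Complex_Main "HOL-Library.Countable"
begin

text \<open>Terms over function symbols of type 'f (arities given by a function),
  variables (Var n) and the new constants C = {c_i} (Cst i).\<close>
datatype 'f trm = Var nat | Cst nat | Fn 'f "'f trm list"

datatype ('f,'r) atom = ADist "'f trm" "'f trm" | ARel 'r "'f trm list"

text \<open>Formulas: atomic, negation, one half, truncated sum, countable conjunction
  (of the countable set range Phi), and inf_x.\<close>
datatype ('f,'r) fml =
    Atom "('f,'r) atom"
  | Neg "('f,'r) fml"
  | Half "('f,'r) fml"
  | Dplus "('f,'r) fml" "('f,'r) fml"
  | Conj "nat \<Rightarrow> ('f,'r) fml"
  | Infx nat "('f,'r) fml"

fun vars_trm :: "'f trm \<Rightarrow> nat set" where
  "vars_trm (Var n) = {n}"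
| "vars_trm (Cst i) = {}"
| "vars_trm (Fn g ts) = (\<Union>t\<in>set ts. vars_trm t)"

fun wf_trm :: "('f \<Rightarrow> nat) \<Rightarrow> 'f trm \<Rightarrow> bool" where
  "wf_trm ar (Var n) = True"
| "wf_trm ar (Cst i) = True"
| "wf_trm ar (Fn g ts) = (length ts = ar g \<and> (\<forall>t\<in>set ts. wf_trm ar t))"

definition closed_trm :: "'f trm \<Rightarrow> bool" where
  "closed_trm t \<longleftrightarrow> vars_trm t = {}"

fun tsubst :: "(nat \<Rightarrow> 'f trm) \<Rightarrow> 'f trm \<Rightarrow> 'f trm" where
  "tsubst \<rho> (Var n) = \<rho> n"
| "tsubst \<rho> (Cst i) = Cst i"
| "tsubst \<rho> (Fn g ts) = Fn g (map (tsubst \<rho>) ts)"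

fun asubst :: "(nat \<Rightarrow> 'f trm) \<Rightarrow> ('f,'r) atom \<Rightarrow> ('f,'r) atom" where
  "asubst \<rho> (ADist t s) = ADist (tsubst \<rho> t) (tsubst \<rho> s)"
| "asubst \<rho> (ARel R ts) = ARel R (map (tsubst \<rho>) ts)"

fun fv_atom :: "('f,'r) atom \<Rightarrow> nat set" where
  "fv_atom (ADist t s) = vars_trm t \<union> vars_trm s"
| "fv_atom (ARel R ts) = (\<Union>t\<in>set ts. vars_trm t)"

fun wf_atom :: "('f \<Rightarrow> nat) \<Rightarrow> ('r \<Rightarrow> nat) \<Rightarrow> ('f,'r) atom \<Rightarrow> bool" where
  "wf_atom arF arR (ADist t s) = (wf_trm arF t \<and> wf_trm arF s)"
| "wf_atom arF arR (ARel R ts) = (length ts = arR R \<and> (\<forall>t\<in>set ts. wf_trm arF t))"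

primrec fv_fml :: "('f,'r) fml \<Rightarrow> nat set" where
  "fv_fml (Atom a) = fv_atom a"
| "fv_fml (Neg \<phi>) = fv_fml \<phi>"
| "fv_fml (Half \<phi>) = fv_fml \<phi>"
| "fv_fml (Dplus \<phi> \<psi>) = fv_fml \<phi> \<union> fv_fml \<psi>"
| "fv_fml (Conj \<Phi>) = (\<Union>n. fv_fml (\<Phi> n))"
| "fv_fml (Infx x \<phi>) = fv_fml \<phi> - {x}"

primrec wf_fml :: "('f \<Rightarrow> nat) \<Rightarrow> ('r \<Rightarrow> nat) \<Rightarrow> ('f,'r) fml \<Rightarrow> bool" where
  "wf_fml arF arR (Atom a) = wf_atom arF arR a"
| "wf_fml arF arR (Neg \<phi>) = wf_fml arF arR \<phi>"
| "wf_fml arF arR (Half \<phi>) = wf_fml arF arR \<phi>"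
| "wf_fml arF arR (Dplus \<phi> \<psi>) = (wf_fml arF arR \<phi> \<and> wf_fml arF arR \<psi>)"
| "wf_fml arF arR (Conj \<Phi>) = (\<forall>n. wf_fml arF arR (\<Phi> n))"
| "wf_fml arF arR (Infx x \<phi>) = wf_fml arF arR \<phi>"

definition sentence :: "('f,'r) fml \<Rightarrow> bool" where
  "sentence \<phi> \<longleftrightarrow> fv_fml \<phi> = {}"

text \<open>Substitution of a closed term for the free occurrences of variable x
  (capture-free because only closed terms are substituted).\<close>
primrec subst_fml :: "nat \<Rightarrow> 'f trm \<Rightarrow> ('f,'r) fml \<Rightarrow> ('f,'r) fml" where
  "subst_fml x t (Atom a) = Atom (asubst (Var(x := t)) a)"
| "subst_fml x t (Neg \<phi>) = Neg (subst_fml x t \<phi>)"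
| "subst_fml x t (Half \<phi>) = Half (subst_fml x t \<phi>)"
| "subst_fml x t (Dplus \<phi> \<psi>) = Dplus (subst_fml x t \<phi>) (subst_fml x t \<psi>)"
| "subst_fml x t (Conj \<Phi>) = Conj (\<lambda>n. subst_fml x t (\<Phi> n))"
| "subst_fml x t (Infx y \<phi>) = (if y = x then Infx y \<phi> else Infx y (subst_fml x t \<phi>))"

text \<open>The poset (P,<=) is the type 'p with its order. f p a is f_p on atomic
  sentences a. delta a x eps is the modulus delta_{a,x}(eps) of the signature.\<close>
definition forcing_property ::
  "('f \<Rightarrow> nat) \<Rightarrow> ('r \<Rightarrow> nat) \<Rightarrow> (('f,'r) atom \<Rightarrow> nat \<Rightarrow> real \<Rightarrow> real)
   \<Rightarrow> ('p::order \<Rightarrow> ('f,'r) atom \<Rightarrow> real) \<Rightarrow> bool" where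
  "forcing_property arF arR delta f \<longleftrightarrow>
     (\<forall>p a. wf_atom arF arR a \<and> fv_atom a = {} \<longrightarrow> 0 \<le> f p a \<and> f p a \<le> 1)
   \<and> (\<forall>p q a. p \<le> q \<and> wf_atom arF arR a \<and> fv_atom a = {} \<longrightarrow> f p a \<le> f q a)
   \<and> (\<forall>p \<epsilon> \<tau> \<sigma> a x. \<epsilon> > 0 \<and> closed_trm \<tau> \<and> closed_trm \<sigma> \<and> wf_trm arF \<tau> \<and> wf_trm arF \<sigma>
        \<and> wf_atom arF arR a \<and> fv_atom a \<subseteq> {x} \<longrightarrow>
        (\<exists>q c. q \<le> p
           \<and> f q (ADist \<tau> (Cst c)) < \<epsilon>
           \<and> f q (ADist \<tau> \<sigma>) < f p (ADist \<sigma> \<tau>) + \<epsilon>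
           \<and> (f p (ADist \<tau> \<sigma>) < delta a x \<epsilon> \<longrightarrow>
                f q (asubst (Var(x := \<sigma>)) a) < f p (asubst (Var(x := \<tau>)) a) + \<epsilon>)))"

text \<open>F_p, defined by recursion with an assignment rho of terms to variables;
  on sentences (rho = Var, i.e. no substitution) the clause for inf_x reads
  F_p(inf_x phi) = inf_c F_p(phi(c)).\<close>
primrec Fenv :: "('p::order \<Rightarrow> ('f,'r) atom \<Rightarrow> real) \<Rightarrow> (nat \<Rightarrow> 'f trm)
                   \<Rightarrow> ('f,'r) fml \<Rightarrow> 'p \<Rightarrow> real" where
  "Fenv f \<rho> (Atom a) p = f p (asubst \<rho> a)"
| "Fenv f \<rho> (Neg \<phi>) p = 1 - (INF q\<in>{..p}. Fenv f \<rho> \<phi> q)"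
| "Fenv f \<rho> (Half \<phi>) p = Fenv f \<rho> \<phi> p / 2"
| "Fenv f \<rho> (Dplus \<phi> \<psi>) p = min (Fenv f \<rho> \<phi> p + Fenv f \<rho> \<psi> p) 1"
| "Fenv f \<rho> (Conj \<Phi>) p = (INF n. Fenv f \<rho> (\<Phi> n) p)"
| "Fenv f \<rho> (Infx x \<phi>) p = (INF c. Fenv f (\<rho>(x := Cst c)) \<phi> p)"

definition Fval :: "('p::order \<Rightarrow> ('f,'r) atom \<Rightarrow> real) \<Rightarrow> 'p \<Rightarrow> ('f,'r) fml \<Rightarrow> real" where
  "Fval f p \<phi> = Fenv f Var \<phi> p"

definition Fw :: "('p::order \<Rightarrow> ('f,'r) atom \<Rightarrow> real) \<Rightarrow> 'p \<Rightarrow> ('f,'r) fml \<Rightarrow> real" where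
  "Fw f p \<phi> = (SUP q\<in>{..p}. INF q'\<in>{..q}. Fval f q' \<phi>)"

end

theory Submission
  imports Defs
begin

text \<open>Weak forcing is the regularisation \<open>weak g p = sup\<^sub>q\<^sub>\<le>\<^sub>p inf\<^sub>q\<^sub>'\<^sub>\<le>\<^sub>q g q'\<close> of the map
  \<open>g = (q \<mapsto> F\<^sub>q(\<chi>))\<close>. Every such \<open>g\<close> is monotone and \<open>[0,1]\<close>-valued, and for these
  \<open>inf\<^sub>q\<^sub>'\<^sub>\<le>\<^sub>q g q' \<le> weak g q \<le> g q\<close>. The clauses for negation, halving and countable
  infima follow from these bounds and sup/inf duality. For the truncated sum one also needs
  \<open>inf\<^sub>r\<^sub>\<le>\<^sub>q (g r + h r) \<le> weak g q + weak h q\<close>, obtained by descending below \<open>q\<close>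
  first for \<open>g\<close> and then, inside, for \<open>h\<close>.\<close>

definition weak :: "('p::order \<Rightarrow> real) \<Rightarrow> 'p \<Rightarrow> real" where
  "weak g p = (SUP q\<in>{..p}. INF r\<in>{..q}. g r)"

lemma Fw_eq_weak: "Fw f p \<phi> = weak (\<lambda>q. Fval f q \<phi>) p"
  by (simp add: Fw_def weak_def)

lemma cINF_const_diff:
  fixes k :: "'a \<Rightarrow> real"
  assumes "A \<noteq> {}" "bdd_above (k ` A)"
  shows "(INF x\<in>A. c - k x) = c - (SUP x\<in>A. k x)"
  using continuous_at_Sup_antimono[of "\<lambda>y. c - y" "k ` A"] assms
  by (simp add: antimono_def image_image continuous_diff continuous_const continuous_ident)

lemma cSUP_const_diff:
  fixes k :: "'a \<Rightarrow> real"
  assumes "A \<noteq> {}" "bdd_below (k ` A)"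
  shows "(SUP x\<in>A. c - k x) = c - (INF x\<in>A. k x)"
  using continuous_at_Inf_antimono[of "\<lambda>y. c - y" "k ` A"] assms
  by (simp add: antimono_def image_image continuous_diff continuous_const continuous_ident)

lemma cINF_half:
  fixes k :: "'a \<Rightarrow> real"
  assumes "A \<noteq> {}" "bdd_below (k ` A)"
  shows "(INF x\<in>A. k x / 2) = (INF x\<in>A. k x) / 2"
  using continuous_at_Inf_mono[of "\<lambda>y. y / 2" "k ` A"] assms
  by (simp add: mono_def image_image continuous_divide continuous_const continuous_ident)

lemma cSUP_half:
  fixes k :: "'a \<Rightarrow> real"
  assumes "A \<noteq> {}" "bdd_above (k ` A)"
  shows "(SUP x\<in>A. k x / 2) = (SUP x\<in>A. k x) / 2"
  using continuous_at_Sup_mono[of "\<lambda>y. y / 2" "k ` A"] assms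
  by (simp add: mono_def image_image continuous_divide continuous_const continuous_ident)

lemma bdd_below_image_unit: "range g \<subseteq> {0..1::real} \<Longrightarrow> bdd_below (g ` A)"
  by (rule bdd_belowI[where m = 0]) (auto simp: image_subset_iff)

lemma bdd_above_image_unit: "range g \<subseteq> {0..1::real} \<Longrightarrow> bdd_above (g ` A)"
  by (rule bdd_aboveI[where M = 1]) (auto simp: image_subset_iff)

lemma INF_in_unit:
  fixes G :: "'i \<Rightarrow> real"
  assumes "I \<noteq> {}" "\<And>i. i \<in> I \<Longrightarrow> G i \<in> {0..1}"
  shows "(INF i\<in>I. G i) \<in> {0..1}"
proof -
  obtain i where i: "i \<in> I" using assms(1) by blast
  have bdd: "bdd_below (G ` I)" using assms(2) by (intro bdd_belowI[where m = 0]) auto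
  have "0 \<le> (INF i\<in>I. G i)" using assms by (intro cINF_greatest) auto
  moreover have "(INF i\<in>I. G i) \<le> G i" using bdd i by (rule cINF_lower)
  ultimately show ?thesis using assms(2)[OF i] by auto
qed

lemma SUP_in_unit:
  fixes G :: "'i \<Rightarrow> real"
  assumes "I \<noteq> {}" "\<And>i. i \<in> I \<Longrightarrow> G i \<in> {0..1}"
  shows "(SUP i\<in>I. G i) \<in> {0..1}"
proof -
  obtain i where i: "i \<in> I" using assms(1) by blast
  have bdd: "bdd_above (G ` I)" using assms(2) by (intro bdd_aboveI[where M = 1]) auto
  have "(SUP i\<in>I. G i) \<le> 1" using assms by (intro cSUP_least) auto
  moreover have "G i \<le> (SUP i\<in>I. G i)" using i bdd by (rule cSUP_upper)
  ultimately show ?thesis using assms(2)[OF i] by auto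
qed

lemma range_INF_atMost:
  fixes g :: "'p::order \<Rightarrow> real"
  shows "range g \<subseteq> {0..1} \<Longrightarrow> range (\<lambda>q. INF r\<in>{..q}. g r) \<subseteq> {0..1}"
  by (auto intro!: INF_in_unit)

lemma INF_atMost_le:
  fixes g :: "'p::order \<Rightarrow> real"
  shows "range g \<subseteq> {0..1} \<Longrightarrow> r \<le> q \<Longrightarrow> (INF s\<in>{..q}. g s) \<le> g r"
  by (rule cINF_lower) (auto intro: bdd_below_image_unit)

lemma antimono_INF_atMost:
  fixes g :: "'p::order \<Rightarrow> real"
  assumes "range g \<subseteq> {0..1}"
  shows "antimono (\<lambda>q. INF r\<in>{..q}. g r)"
  by (rule antimonoI, rule cINF_superset_mono) (auto intro: bdd_below_image_unit[OF assms])

lemma range_weak: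
  fixes g :: "'p::order \<Rightarrow> real"
  shows "range g \<subseteq> {0..1} \<Longrightarrow> range (weak g) \<subseteq> {0..1}"
  unfolding weak_def using range_INF_atMost[of g] by (auto intro!: SUP_in_unit)

lemma INF_atMost_le_weak:
  fixes g :: "'p::order \<Rightarrow> real"
  assumes "range g \<subseteq> {0..1}"
  shows "(INF r\<in>{..q}. g r) \<le> weak g q"
  unfolding weak_def
  by (rule cSUP_upper) (auto intro: bdd_above_image_unit[OF range_INF_atMost[OF assms]])

lemma mono_weak:
  fixes g :: "'p::order \<Rightarrow> real"
  assumes "range g \<subseteq> {0..1}"
  shows "mono (weak g)"
  unfolding weak_def
  by (rule monoI, rule cSUP_subset_mono) (auto intro: bdd_above_image_unit[OF range_INF_atMost[OF assms]])

lemma weak_le: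
  fixes g :: "'p::order \<Rightarrow> real"
  assumes "range g \<subseteq> {0..1}" "mono g"
  shows "weak g q \<le> g q"
  unfolding weak_def
proof (rule cSUP_least)
  fix r assume "r \<in> {..q}"
  then show "(INF s\<in>{..r}. g s) \<le> g q"
    using INF_atMost_le[OF assms(1), of r r] monoD[OF assms(2), of r q] by auto
qed auto

lemma weak_le_weak:
  fixes g h :: "'p::order \<Rightarrow> real"
  assumes g: "range g \<subseteq> {0..1}" and h: "range h \<subseteq> {0..1}"
    and gh: "\<And>q. (INF r\<in>{..q}. g r) \<le> h q"
  shows "weak g p \<le> weak h p"
  unfolding weak_def
proof (rule cSUP_subset_mono)
  fix q
  show "(INF r\<in>{..q}. g r) \<le> (INF r\<in>{..q}. h r)"
  proof (rule cINF_greatest)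
    fix r assume "r \<in> {..q}"
    then have "(INF s\<in>{..q}. g s) \<le> (INF s\<in>{..r}. g s)"
      using antimono_INF_atMost[OF g] by (auto dest: antimonoD)
    then show "(INF s\<in>{..q}. g s) \<le> h r" using gh[of r] by linarith
  qed auto
qed (auto intro: bdd_above_image_unit[OF range_INF_atMost[OF h]])

lemma weak_pointwise_mono:
  fixes g h :: "'p::order \<Rightarrow> real"
  assumes "range g \<subseteq> {0..1}" "range h \<subseteq> {0..1}" "\<And>q. g q \<le> h q"
  shows "weak g p \<le> weak h p"
  using assms(1,2) order_trans[OF INF_atMost_le[OF assms(1) order_refl] assms(3)]
  by (rule weak_le_weak)

lemma weak_neg:
  fixes g :: "'p::order \<Rightarrow> real"
  assumes g: "range g \<subseteq> {0..1}"
  shows "weak (\<lambda>q. 1 - (INF r\<in>{..q}. g r)) p = 1 - (INF q\<in>{..p}. weak g q)"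
proof -
  have "(INF r\<in>{..q}. 1 - (INF s\<in>{..r}. g s)) = 1 - weak g q" for q
    unfolding weak_def
    by (rule cINF_const_diff) (auto intro: bdd_above_image_unit[OF range_INF_atMost[OF g]])
  then have "weak (\<lambda>q. 1 - (INF r\<in>{..q}. g r)) p = (SUP q\<in>{..p}. 1 - weak g q)"
    by (simp add: weak_def)
  also have "\<dots> = 1 - (INF q\<in>{..p}. weak g q)"
    by (rule cSUP_const_diff) (auto intro: bdd_below_image_unit[OF range_weak[OF g]])
  finally show ?thesis .
qed

lemma weak_half:
  fixes g :: "'p::order \<Rightarrow> real"
  assumes g: "range g \<subseteq> {0..1}"
  shows "weak (\<lambda>q. g q / 2) p = weak g p / 2"
  unfolding weak_def
  by (simp add: cINF_half cSUP_half bdd_below_image_unit[OF g]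
      bdd_above_image_unit[OF range_INF_atMost[OF g]])

lemma INF_add_le_weak_add:
  fixes g h :: "'p::order \<Rightarrow> real"
  assumes g: "range g \<subseteq> {0..1}" "mono g" and h: "range h \<subseteq> {0..1}"
  shows "(INF r\<in>{..q}. g r + h r) \<le> weak g q + weak h q"
proof -
  have bdd_gh: "bdd_below ((\<lambda>r. g r + h r) ` A)" for A
    using g(1) h by (intro bdd_belowI[where m = 0]) (auto simp: image_subset_iff add_nonneg_nonneg)
  have "(INF r\<in>{..q}. g r + h r) - weak h q \<le> g r'" if "r' \<le> q" for r'
  proof -
    have "(INF r\<in>{..q}. g r + h r) \<le> (INF r\<in>{..r'}. g r + h r)"
      using that by (intro cINF_superset_mono[OF _ bdd_gh]) auto
    also have "\<dots> \<le> (INF r\<in>{..r'}. g r' + h r)"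
      by (rule cINF_superset_mono[OF _ bdd_gh]) (auto intro: add_right_mono monoD[OF g(2)])
    also have "\<dots> = g r' + (INF r\<in>{..r'}. h r)"
      by (rule Inf_add_eq) (auto intro: bdd_below_image_unit[OF h])
    also have "\<dots> \<le> g r' + weak h r'"
      using INF_atMost_le_weak[OF h] by simp
    also have "\<dots> \<le> g r' + weak h q"
      using monoD[OF mono_weak[OF h] that] by simp
    finally show ?thesis by simp
  qed
  then have "(INF r\<in>{..q}. g r + h r) - weak h q \<le> (INF r\<in>{..q}. g r)"
    by (intro cINF_greatest) auto
  then show ?thesis using INF_atMost_le_weak[OF g(1), of q] by linarith
qed

lemma weak_min_add:
  fixes g h :: "'p::order \<Rightarrow> real"
  assumes g: "range g \<subseteq> {0..1}" "mono g" and h: "range h \<subseteq> {0..1}" "mono h"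
  shows "weak (\<lambda>q. min (g q + h q) 1) p = weak (\<lambda>q. min (weak g q + weak h q) 1) p"
proof (rule antisym)
  have vals: "g q \<in> {0..1}" "h q \<in> {0..1}" "weak g q \<in> {0..1}" "weak h q \<in> {0..1}" for q
    using g(1) h(1) range_weak[OF g(1)] range_weak[OF h(1)] by blast+
  have unit: "range (\<lambda>q. min (g q + h q) 1) \<subseteq> {0..1}"
    "range (\<lambda>q. min (weak g q + weak h q) 1) \<subseteq> {0..1}"
    using vals by (auto simp: image_subset_iff)
  show "weak (\<lambda>q. min (g q + h q) 1) p \<le> weak (\<lambda>q. min (weak g q + weak h q) 1) p"
  proof (rule weak_le_weak[OF unit])
    fix q
    have "(INF r\<in>{..q}. min (g r + h r) 1) \<le> (INF r\<in>{..q}. g r + h r)"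
      by (rule cINF_superset_mono[OF _ bdd_below_image_unit[OF unit(1)]]) simp_all
    also have "\<dots> \<le> weak g q + weak h q" by (rule INF_add_le_weak_add[OF g h(1)])
    finally show "(INF r\<in>{..q}. min (g r + h r) 1) \<le> min (weak g q + weak h q) 1"
      using INF_atMost_le[OF unit(1), of q q] by simp
  qed
  show "weak (\<lambda>q. min (weak g q + weak h q) 1) p \<le> weak (\<lambda>q. min (g q + h q) 1) p"
    using unit(2,1) by (rule weak_pointwise_mono)
      (simp add: add_mono min.coboundedI1 weak_le[OF g] weak_le[OF h])
qed

lemma weak_INF:
  fixes G :: "'i \<Rightarrow> 'p::order \<Rightarrow> real"
  assumes G: "\<And>i. range (G i) \<subseteq> {0..1}" "\<And>i. mono (G i)"
  shows "weak (\<lambda>q. INF i. G i q) p = weak (\<lambda>q. INF i. weak (G i) q) p"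
proof (rule antisym)
  have unit_G: "G i q \<in> {0..1}" "weak (G i) q \<in> {0..1}" for i q
    using G(1) range_weak[OF G(1)] by blast+
  have unit: "range (\<lambda>q. INF i. G i q) \<subseteq> {0..1}" "range (\<lambda>q. INF i. weak (G i) q) \<subseteq> {0..1}"
    using INF_in_unit[of UNIV "\<lambda>i. G i _"] INF_in_unit[of UNIV "\<lambda>i. weak (G i) _"] unit_G
    by auto
  have bdd: "bdd_below (range (\<lambda>i. G i q))" "bdd_below (range (\<lambda>i. weak (G i) q))" for q
    using unit_G by (auto intro!: bdd_belowI[where m = 0])
  show "weak (\<lambda>q. INF i. G i q) p \<le> weak (\<lambda>q. INF i. weak (G i) q) p"
  proof (rule weak_le_weak[OF unit])
    fix q
    show "(INF r\<in>{..q}. INF i. G i r) \<le> (INF i. weak (G i) q)"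
    proof (rule cINF_greatest)
      fix i
      have "(INF r\<in>{..q}. INF i. G i r) \<le> (INF r\<in>{..q}. G i r)"
        by (rule cINF_superset_mono[OF _ bdd_below_image_unit[OF unit(1)]])
          (auto intro: cINF_lower[OF bdd(1)])
      also have "\<dots> \<le> weak (G i) q" by (rule INF_atMost_le_weak[OF G(1)])
      finally show "(INF r\<in>{..q}. INF i. G i r) \<le> weak (G i) q" .
    qed simp
  qed
  show "weak (\<lambda>q. INF i. weak (G i) q) p \<le> weak (\<lambda>q. INF i. G i q) p"
    using unit(2,1) by (rule weak_pointwise_mono)
      (rule cINF_superset_mono[OF _ bdd(2)], simp_all add: weak_le[OF G])
qed

lemma range_mono_neg:
  fixes g :: "'p::order \<Rightarrow> real"
  assumes g: "range g \<subseteq> {0..1}"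
  shows "range (\<lambda>q. 1 - (INF r\<in>{..q}. g r)) \<subseteq> {0..1} \<and> mono (\<lambda>q. 1 - (INF r\<in>{..q}. g r))"
proof
  show "range (\<lambda>q. 1 - (INF r\<in>{..q}. g r)) \<subseteq> {0..1}"
    using range_INF_atMost[OF g] by (auto simp: image_subset_iff)
  show "mono (\<lambda>q. 1 - (INF r\<in>{..q}. g r))"
    using antimonoD[OF antimono_INF_atMost[OF g]] by (intro monoI) simp
qed

lemma range_mono_min_add:
  fixes g h :: "'p::order \<Rightarrow> real"
  assumes "range g \<subseteq> {0..1}" "mono g" "range h \<subseteq> {0..1}" "mono h"
  shows "range (\<lambda>q. min (g q + h q) 1) \<subseteq> {0..1} \<and> mono (\<lambda>q. min (g q + h q) 1)"
proof
  show "range (\<lambda>q. min (g q + h q) 1) \<subseteq> {0..1}"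
    using assms(1,3) by (auto simp: image_subset_iff)
  show "mono (\<lambda>q. min (g q + h q) 1)"
    using assms(2,4) by (intro monoI min.mono add_mono) (auto dest: monoD)
qed

lemma range_mono_INF:
  fixes G :: "'i \<Rightarrow> 'p::order \<Rightarrow> real"
  assumes G: "\<And>i. range (G i) \<subseteq> {0..1}" "\<And>i. mono (G i)"
  shows "range (\<lambda>q. INF i. G i q) \<subseteq> {0..1} \<and> mono (\<lambda>q. INF i. G i q)"
proof
  have unit_G: "G i q \<in> {0..1}" for i q using G(1) by blast
  show "range (\<lambda>q. INF i. G i q) \<subseteq> {0..1}"
    using INF_in_unit[of UNIV "\<lambda>i. G i _"] unit_G by auto
  have "bdd_below (range (\<lambda>i. G i q))" for q
    using unit_G by (auto intro!: bdd_belowI[where m = 0])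
  then show "mono (\<lambda>q. INF i. G i q)"
    by (intro monoI cINF_superset_mono) (auto intro: monoD[OF G(2)])
qed

lemma vars_tsubst: "vars_trm (tsubst \<rho> t) = (\<Union>n\<in>vars_trm t. vars_trm (\<rho> n))"
  by (induction t) auto

lemma wf_tsubst: "wf_trm ar t \<Longrightarrow> (\<And>n. wf_trm ar (\<rho> n)) \<Longrightarrow> wf_trm ar (tsubst \<rho> t)"
  by (induction t) auto

lemma tsubst_closed: "vars_trm t = {} \<Longrightarrow> tsubst \<rho> t = t"
proof (induction t)
  case (Fn g ts)
  then have "map (tsubst \<rho>) ts = ts" by (auto intro: map_idI)
  then show ?case by simp
qed auto

lemma tsubst_tsubst: "tsubst \<rho> (tsubst \<sigma> t) = tsubst (\<lambda>n. tsubst \<rho> (\<sigma> n)) t"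
  by (induction t) auto

lemma wf_closed_asubst:
  assumes "wf_atom arF arR a" "\<And>n. wf_trm arF (\<rho> n)" "\<And>n. n \<in> fv_atom a \<Longrightarrow> vars_trm (\<rho> n) = {}"
  shows "wf_atom arF arR (asubst \<rho> a) \<and> fv_atom (asubst \<rho> a) = {}"
  using assms by (cases a) (auto simp: vars_tsubst wf_tsubst)

lemma Fenv_subst:
  assumes "vars_trm t = {}"
  shows "Fenv f \<rho> (subst_fml x t \<phi>) p = Fenv f (\<rho>(x := t)) \<phi> p"
proof (induction \<phi> arbitrary: \<rho> p)
  case (Atom a)
  have "(\<lambda>n. tsubst \<rho> (if n = x then t else Var n)) = (\<lambda>n. if n = x then t else \<rho> n)"
    using tsubst_closed[OF assms] by (auto simp: fun_eq_iff)
  then show ?case by (cases a) (simp_all add: tsubst_tsubst comp_def)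
next
  case (Infx y \<phi>)
  show ?case
  proof (cases "y = x")
    case True
    show ?thesis unfolding True by (simp only: subst_fml.simps simp_thms if_True Fenv.simps fun_upd_upd)
  next
    case False
    then have "(\<rho>(y := Cst c))(x := t) = (\<rho>(x := t))(y := Cst c)" for c
      by (rule fun_upd_twist)
    with False show ?thesis by (simp only: subst_fml.simps if_False Fenv.simps Infx.IH)
  qed
qed simp_all

lemma Fenv_range_mono:
  fixes f :: "'p::order \<Rightarrow> ('f,'r) atom \<Rightarrow> real"
  assumes fp: "forcing_property arF arR delta f"
  shows "wf_fml arF arR \<phi> \<Longrightarrow> (\<And>n. wf_trm arF (\<rho> n)) \<Longrightarrow>
    (\<And>n. n \<in> fv_fml \<phi> \<Longrightarrow> vars_trm (\<rho> n) = {}) \<Longrightarrow>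
    range (Fenv f \<rho> \<phi>) \<subseteq> {0..1} \<and> mono (Fenv f \<rho> \<phi>)"
proof (induction \<phi> arbitrary: \<rho>)
  case (Atom a)
  then have "wf_atom arF arR (asubst \<rho> a) \<and> fv_atom (asubst \<rho> a) = {}"
    by (intro wf_closed_asubst) auto
  then show ?case using fp unfolding forcing_property_def by (auto simp: mono_def)
next
  case (Neg \<phi>)
  have "Fenv f \<rho> (Neg \<phi>) = (\<lambda>q. 1 - (INF r\<in>{..q}. Fenv f \<rho> \<phi> r))" by (simp add: fun_eq_iff)
  with Neg show ?case using range_mono_neg[of "Fenv f \<rho> \<phi>"] by simp
next
  case (Half \<phi>)
  then have unit: "range (Fenv f \<rho> \<phi>) \<subseteq> {0..1}" and mono: "mono (Fenv f \<rho> \<phi>)" by simp_all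
  have unit_val: "Fenv f \<rho> \<phi> q \<in> {0..1}" for q using unit by blast
  have "Fenv f \<rho> (Half \<phi>) q \<in> {0..1}" for q using unit_val[of q] by simp
  then show ?case using mono by (auto simp: mono_def)
next
  case (Dplus \<phi> \<psi>)
  have "Fenv f \<rho> (Dplus \<phi> \<psi>) = (\<lambda>q. min (Fenv f \<rho> \<phi> q + Fenv f \<rho> \<psi> q) 1)" by (simp add: fun_eq_iff)
  with Dplus show ?case using range_mono_min_add[of "Fenv f \<rho> \<phi>" "Fenv f \<rho> \<psi>"] by simp
next
  case (Conj \<Phi>)
  have "range (Fenv f \<rho> (\<Phi> n)) \<subseteq> {0..1} \<and> mono (Fenv f \<rho> (\<Phi> n))" for n
    by (rule Conj.IH[OF rangeI]) (use Conj.prems in auto)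
  moreover have "Fenv f \<rho> (Conj \<Phi>) = (\<lambda>q. INF n. Fenv f \<rho> (\<Phi> n) q)" by (simp add: fun_eq_iff)
  ultimately show ?case using range_mono_INF[of "\<lambda>n. Fenv f \<rho> (\<Phi> n)"] by simp
next
  case (Infx x \<phi>)
  have "range (Fenv f (\<rho>(x := Cst c)) \<phi>) \<subseteq> {0..1} \<and> mono (Fenv f (\<rho>(x := Cst c)) \<phi>)" for c
    by (rule Infx.IH) (use Infx.prems in auto)
  moreover have "Fenv f \<rho> (Infx x \<phi>) = (\<lambda>q. INF c. Fenv f (\<rho>(x := Cst c)) \<phi> q)"
    by (simp add: fun_eq_iff)
  ultimately show ?case using range_mono_INF[of "\<lambda>c. Fenv f (\<rho>(x := Cst c)) \<phi>"] by simp
qed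

lemma Fval_range_mono:
  assumes "forcing_property arF arR delta f" "sentence \<phi>" "wf_fml arF arR \<phi>"
  shows "range (\<lambda>q. Fval f q \<phi>) \<subseteq> {0..1} \<and> mono (\<lambda>q. Fval f q \<phi>)"
  unfolding Fval_def using assms by (intro Fenv_range_mono) (auto simp: sentence_def)

lemma Fw_Neg:
  assumes "forcing_property arF arR delta f" "sentence \<phi>" "wf_fml arF arR \<phi>"
  shows "Fw f p (Neg \<phi>) = 1 - (INF q\<in>{..p}. Fw f q \<phi>)"
proof -
  have "Fw f p (Neg \<phi>) = weak (\<lambda>q. 1 - (INF r\<in>{..q}. Fval f r \<phi>)) p"
    by (simp add: Fw_eq_weak Fval_def)
  also have "\<dots> = 1 - (INF q\<in>{..p}. weak (\<lambda>q. Fval f q \<phi>) q)"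
    using Fval_range_mono[OF assms] by (intro weak_neg) blast
  finally show ?thesis by (simp add: Fw_eq_weak)
qed

lemma Fw_Half:
  assumes "forcing_property arF arR delta f" "sentence \<phi>" "wf_fml arF arR \<phi>"
  shows "Fw f p (Half \<phi>) = Fw f p \<phi> / 2"
  using Fval_range_mono[OF assms] weak_half[of "\<lambda>q. Fval f q \<phi>"]
  by (simp add: Fw_eq_weak Fval_def)

lemma Fw_Dplus:
  assumes "forcing_property arF arR delta f"
    and "sentence \<phi>" "wf_fml arF arR \<phi>" "sentence \<psi>" "wf_fml arF arR \<psi>"
  shows "Fw f p (Dplus \<phi> \<psi>) = (SUP q\<in>{..p}. INF q'\<in>{..q}. min (Fw f q' \<phi> + Fw f q' \<psi>) 1)"
proof -
  have "Fw f p (Dplus \<phi> \<psi>) = weak (\<lambda>q. min (Fval f q \<phi> + Fval f q \<psi>) 1) p"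
    by (simp add: Fw_eq_weak Fval_def)
  also have "\<dots> = weak (\<lambda>q. min (weak (\<lambda>q. Fval f q \<phi>) q + weak (\<lambda>q. Fval f q \<psi>) q) 1) p"
    using Fval_range_mono[OF assms(1-3)] Fval_range_mono[OF assms(1,4,5)]
    by (intro weak_min_add) blast+
  finally show ?thesis by (simp add: Fw_eq_weak weak_def)
qed

lemma Fw_Conj:
  assumes "forcing_property arF arR delta f" "\<forall>n. sentence (\<Phi> n) \<and> wf_fml arF arR (\<Phi> n)"
  shows "Fw f p (Conj \<Phi>) = (SUP q\<in>{..p}. INF q'\<in>{..q}. INF n. Fw f q' (\<Phi> n))"
proof -
  have "Fw f p (Conj \<Phi>) = weak (\<lambda>q. INF n. Fval f q (\<Phi> n)) p"
    by (simp add: Fw_eq_weak Fval_def)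
  also have "\<dots> = weak (\<lambda>q. INF n. weak (\<lambda>q. Fval f q (\<Phi> n)) q) p"
    using Fval_range_mono[OF assms(1)] assms(2) by (intro weak_INF) blast+
  finally show ?thesis by (simp add: Fw_eq_weak weak_def)
qed

lemma Fw_Infx:
  assumes fp: "forcing_property arF arR delta f"
    and "sentence (Infx x \<phi>)" "wf_fml arF arR \<phi>"
  shows "Fw f p (Infx x \<phi>) =
    (SUP q\<in>{..p}. INF q'\<in>{..q}. INF c. Fw f q' (subst_fml x (Cst c) \<phi>))"
proof -
  have instance_eq: "(\<lambda>q. Fval f q (subst_fml x (Cst c) \<phi>)) = Fenv f (Var(x := Cst c)) \<phi>" for c
    by (simp add: fun_eq_iff Fval_def Fenv_subst)
  have "range (Fenv f (Var(x := Cst c)) \<phi>) \<subseteq> {0..1} \<and> mono (Fenv f (Var(x := Cst c)) \<phi>)" for c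
    using assms by (intro Fenv_range_mono[OF fp]) (auto simp: sentence_def)
  then have "Fw f p (Infx x \<phi>) = weak (\<lambda>q. INF c. weak (Fenv f (Var(x := Cst c)) \<phi>) q) p"
    by (simp add: Fw_eq_weak Fval_def weak_INF)
  then show ?thesis by (simp add: Fw_eq_weak weak_def instance_eq)
qed

theorem proposition2p9:
  fixes arF :: "'f::countable \<Rightarrow> nat" and arR :: "'r::countable \<Rightarrow> nat"
    and delta :: "('f,'r) atom \<Rightarrow> nat \<Rightarrow> real \<Rightarrow> real"
    and f :: "'p::order \<Rightarrow> ('f,'r) atom \<Rightarrow> real"
    and p :: 'p
  assumes "forcing_property arF arR delta f"
  shows
    "(\<forall>\<phi>. sentence \<phi> \<and> wf_fml arF arR \<phi> \<longrightarrow>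
        Fw f p (Neg \<phi>) = 1 - (INF q\<in>{..p}. Fw f q \<phi>))
   \<and> (\<forall>\<phi>. sentence \<phi> \<and> wf_fml arF arR \<phi> \<longrightarrow>
        Fw f p (Half \<phi>) = Fw f p \<phi> / 2)
   \<and> (\<forall>\<phi> \<psi>. sentence \<phi> \<and> wf_fml arF arR \<phi> \<and> sentence \<psi> \<and> wf_fml arF arR \<psi> \<longrightarrow>
        Fw f p (Dplus \<phi> \<psi>) =
          (SUP q\<in>{..p}. INF q'\<in>{..q}. min (Fw f q' \<phi> + Fw f q' \<psi>) 1))
   \<and> (\<forall>\<Phi>. (\<forall>n. sentence (\<Phi> n) \<and> wf_fml arF arR (\<Phi> n)) \<longrightarrow>
        Fw f p (Conj \<Phi>) = (SUP q\<in>{..p}. INF q'\<in>{..q}. INF n. Fw f q' (\<Phi> n)))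
   \<and> (\<forall>x \<phi>. sentence (Infx x \<phi>) \<and> wf_fml arF arR \<phi> \<longrightarrow>
        Fw f p (Infx x \<phi>) =
          (SUP q\<in>{..p}. INF q'\<in>{..q}. INF c. Fw f q' (subst_fml x (Cst c) \<phi>)))"
  using Fw_Neg[OF assms] Fw_Half[OF assms] Fw_Dplus[OF assms] Fw_Conj[OF assms] Fw_Infx[OF assms]
  by blast

end
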